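(* Let $\Lambda$ be a finite connected cubic graph admitting a group of automorphisms $G$ acting transitively on the $2$-arcs of $\Lambda$, and let $\Gamma=\mathrm{Dart}(\Lambda)$, with $G$ acting on $\Gamma$ naturally via $(u,v)\mapsto(u^g,v^g)$. Then $\Gamma$ is a tetravalent $G$-half-arc-transitive graph with $\mathrm{rad}_G(\Gamma)=3$ and $\mathrm{att}_G(\Gamma)=2$, and $\mathrm{Alt}_G(\Gamma)\cong\Lambda$. Moreover, the natural orientation of $\mathrm{Dart}(\Lambda)$ coincides with one of the two paired orientations of $\Gamma$ induced by the action of $G$.
   Context: All graphs are finite and simple. A $2$-arc is a walk $(x,y,z)$ with $x\ne z$. For a cubic graph $\Lambda$, the dart graph $\mathrm{Dart}(\Lambda)$ has as vertices the arcs (ordered pairs of adjacent vertices) of $\Lambda$, with $(u,v)$ adjacent to $(u',v')$ iff either $u'=v$ and $u\neq v'$, or $u=v'$ and $u'\neq v$; its natural orientation orients the edge $(u,v)(v,w)$ from $(u,v)$ to $(v,w)$. For a tetravalent graph $\Gamma$ and $G\le \mathrm{Aut}(\Gamma)$, $\Gamma$ is $G$-half-arc-transitive if $G$ acts transitively on vertices and edges but not on arcs; then the two $G$-orbits on arcs give two paired orientations of the edges, and each vertex is the tail of two and head of two incident edges. A $G$-alternating cycle is a cycle in which every two consecutive edges have a common head or a common tail. All have length $2\,\mathrm{rad}_G(\Gamma)$, and any two sharing a vertex meet in $\mathrm{att}_G(\Gamma)$ vertices. $\mathrm{Alt}_G(\Gamma)$ is the graph whose vertices are the $G$-alternating cycles,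 two adjacent iff they share a vertex. *)

theory Defs
  imports Main
begin

definition simple_graph :: "'a set \<Rightarrow> ('a \<Rightarrow> 'a \<Rightarrow> bool) \<Rightarrow> bool" where
  "simple_graph V E \<longleftrightarrow> finite V \<and>
     (\<forall>x y. E x y \<longrightarrow> x \<in> V \<and> y \<in> V \<and> x \<noteq> y \<and> E y x)"

definition regular_graph :: "'a set \<Rightarrow> ('a \<Rightarrow> 'a \<Rightarrow> bool) \<Rightarrow> nat \<Rightarrow> bool" where
  "regular_graph V E k \<longleftrightarrow> (\<forall>v\<in>V. card {w \<in> V. E v w} = k)"

definition connected_graph :: "'a set \<Rightarrow> ('a \<Rightarrow> 'a \<Rightarrow> bool) \<Rightarrow> bool" where
  "connected_graph V E \<longleftrightarrow> V \<noteq> {} \<and> (\<forall>x\<in>V. \<forall>y\<in>V. E\<^sup>*\<^sup>* x y)"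

definition graph_aut :: "'a set \<Rightarrow> ('a \<Rightarrow> 'a \<Rightarrow> bool) \<Rightarrow> ('a \<Rightarrow> 'a) \<Rightarrow> bool" where
  "graph_aut V E g \<longleftrightarrow> bij_betw g V V \<and> (\<forall>x\<in>V. \<forall>y\<in>V. E x y \<longleftrightarrow> E (g x) (g y))"

definition graph_iso :: "'a set \<Rightarrow> ('a \<Rightarrow> 'a \<Rightarrow> bool) \<Rightarrow> 'b set \<Rightarrow> ('b \<Rightarrow> 'b \<Rightarrow> bool) \<Rightarrow> bool" where
  "graph_iso V E W F \<longleftrightarrow> (\<exists>f. bij_betw f V W \<and> (\<forall>x\<in>V. \<forall>y\<in>V. E x y \<longleftrightarrow> F (f x) (f y)))"

text \<open>A group of automorphisms of (V,E), as a set of permutations of the vertex set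
  (functions are compared on V only, i.e. as permutations of V).\<close>

definition aut_group :: "'a set \<Rightarrow> ('a \<Rightarrow> 'a \<Rightarrow> bool) \<Rightarrow> ('a \<Rightarrow> 'a) set \<Rightarrow> bool" where
  "aut_group V E G \<longleftrightarrow> (\<forall>g\<in>G. graph_aut V E g) \<and> (\<exists>g\<in>G. \<forall>x\<in>V. g x = x) \<and>
     (\<forall>g\<in>G. \<forall>h\<in>G. \<exists>k\<in>G. \<forall>x\<in>V. k x = g (h x)) \<and>
     (\<forall>g\<in>G. \<exists>h\<in>G. \<forall>x\<in>V. h (g x) = x)"

definition two_arcs :: "('a \<Rightarrow> 'a \<Rightarrow> bool) \<Rightarrow> ('a \<times> 'a \<times> 'a) set" where
  "two_arcs E = {(x, y, z). E x y \<and> E y z \<and> x \<noteq> z}"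

definition two_arc_transitive :: "('a \<Rightarrow> 'a \<Rightarrow> bool) \<Rightarrow> ('a \<Rightarrow> 'a) set \<Rightarrow> bool" where
  "two_arc_transitive E G \<longleftrightarrow>
     (\<forall>(x, y, z)\<in>two_arcs E. \<forall>(x', y', z')\<in>two_arcs E.
        \<exists>g\<in>G. g x = x' \<and> g y = y' \<and> g z = z')"

definition darts :: "('a \<Rightarrow> 'a \<Rightarrow> bool) \<Rightarrow> ('a \<times> 'a) set" where
  "darts E = {(u, v). E u v}"

definition dart_adj :: "('a \<Rightarrow> 'a \<Rightarrow> bool) \<Rightarrow> 'a \<times> 'a \<Rightarrow> 'a \<times> 'a \<Rightarrow> bool" where
  "dart_adj E a b \<longleftrightarrow> a \<in> darts E \<and> b \<in> darts E \<and>
     ((fst b = snd a \<and> fst a \<noteq> snd b) \<or> (fst a = snd b \<and> fst b \<noteq> snd a))"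

definition natural_orientation :: "('a \<Rightarrow> 'a \<Rightarrow> bool) \<Rightarrow> (('a \<times> 'a) \<times> ('a \<times> 'a)) set" where
  "natural_orientation E = {(a, b). a \<in> darts E \<and> b \<in> darts E \<and> fst b = snd a \<and> fst a \<noteq> snd b}"

definition dart_act :: "('a \<Rightarrow> 'a) \<Rightarrow> 'a \<times> 'a \<Rightarrow> 'a \<times> 'a" where
  "dart_act g a = (g (fst a), g (snd a))"

definition arcs :: "('b \<Rightarrow> 'b \<Rightarrow> bool) \<Rightarrow> ('b \<times> 'b) set" where
  "arcs F = {(x, y). F x y}"

definition arc_orbit :: "('b \<Rightarrow> 'b) set \<Rightarrow> 'b \<times> 'b \<Rightarrow> ('b \<times> 'b) set" where
  "arc_orbit H a = {(h (fst a), h (snd a)) | h. h \<in> H}"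

definition half_arc_transitive :: "'b set \<Rightarrow> ('b \<Rightarrow> 'b \<Rightarrow> bool) \<Rightarrow> ('b \<Rightarrow> 'b) set \<Rightarrow> bool" where
  "half_arc_transitive W F H \<longleftrightarrow>
     (\<forall>h\<in>H. graph_aut W F h) \<and>
     (\<forall>x\<in>W. \<forall>y\<in>W. \<exists>h\<in>H. h x = y) \<and>
     (\<forall>x y x' y'. F x y \<longrightarrow> F x' y' \<longrightarrow> (\<exists>h\<in>H. {h x, h y} = {x', y'})) \<and>
     \<not> (\<forall>x y x' y'. F x y \<longrightarrow> F x' y' \<longrightarrow> (\<exists>h\<in>H. h x = x' \<and> h y = y'))"

text \<open>A cycle is represented by its set of (undirected) edges; consecutive edges
  v_{i-1}v_i and v_i v_{i+1} must have common head v_i or common tail v_i.\<close>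

definition alt_cycle :: "'b set \<Rightarrow> ('b \<Rightarrow> 'b \<Rightarrow> bool) \<Rightarrow> ('b \<times> 'b) set \<Rightarrow> 'b set set \<Rightarrow> bool" where
  "alt_cycle W F D C \<longleftrightarrow> (\<exists>vs. let n = length vs in
      distinct vs \<and> n \<ge> 3 \<and> set vs \<subseteq> W \<and>
      (\<forall>i<n. F (vs ! i) (vs ! ((i + 1) mod n))) \<and>
      (\<forall>i<n. let p = vs ! ((i + n - 1) mod n); c = vs ! i; s = vs ! ((i + 1) mod n) in
          ((p, c) \<in> D \<and> (s, c) \<in> D) \<or> ((c, p) \<in> D \<and> (c, s) \<in> D)) \<and>
      C = {{vs ! i, vs ! ((i + 1) mod n)} | i. i < n})"

definition cycle_verts :: "'b set set \<Rightarrow> 'b set" where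
  "cycle_verts C = \<Union>C"

definition has_radius :: "'b set \<Rightarrow> ('b \<Rightarrow> 'b \<Rightarrow> bool) \<Rightarrow> ('b \<times> 'b) set \<Rightarrow> nat \<Rightarrow> bool" where
  "has_radius W F D r \<longleftrightarrow> (\<exists>C. alt_cycle W F D C) \<and>
     (\<forall>C. alt_cycle W F D C \<longrightarrow> card C = 2 * r)"

definition has_attachment :: "'b set \<Rightarrow> ('b \<Rightarrow> 'b \<Rightarrow> bool) \<Rightarrow> ('b \<times> 'b) set \<Rightarrow> nat \<Rightarrow> bool" where
  "has_attachment W F D a \<longleftrightarrow>
     (\<forall>C1 C2. alt_cycle W F D C1 \<longrightarrow> alt_cycle W F D C2 \<longrightarrow> C1 \<noteq> C2 \<longrightarrow>
        cycle_verts C1 \<inter> cycle_verts C2 \<noteq> {} \<longrightarrow> card (cycle_verts C1 \<inter> cycle_verts C2) = a)"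

definition alt_vertices :: "'b set \<Rightarrow> ('b \<Rightarrow> 'b \<Rightarrow> bool) \<Rightarrow> ('b \<times> 'b) set \<Rightarrow> 'b set set set" where
  "alt_vertices W F D = {C. alt_cycle W F D C}"

definition alt_adj :: "'b set \<Rightarrow> ('b \<Rightarrow> 'b \<Rightarrow> bool) \<Rightarrow> ('b \<times> 'b) set \<Rightarrow> 'b set set \<Rightarrow> 'b set set \<Rightarrow> bool" where
  "alt_adj W F D C1 C2 \<longleftrightarrow> alt_cycle W F D C1 \<and> alt_cycle W F D C2 \<and> C1 \<noteq> C2 \<and>
     cycle_verts C1 \<inter> cycle_verts C2 \<noteq> {}"

end

theory Submission imports Defs begin

text \<open>An arc ((u, m), (m, w)) of the natural orientation of Dart(\<Lambda>) is the same as a 2-arc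
  (u, m, w) of \<Lambda>, so 2-arc transitivity makes G transitive on these arcs; as G preserves
  the natural orientation, which is antisymmetric, G is half-arc-transitive with the natural
  orientation and its reverse as the two paired orientations. In an alternating cycle
  consecutive edges both enter or both leave their common dart, hence pass through the same
  vertex v of \<Lambda>; since every dart at v has only two such edges, the cycle is the hexagon of
  the six darts at v. So rad = 3, two hexagons meet exactly in the two darts of an edge vw,
  and v \<mapsto> hexagon(v) is an isomorphism from \<Lambda> to the graph of alternating cycles.\<close>

lemma Suc_mod_pred_mod: "i < (n::nat) \<Longrightarrow> ((i + n - 1) mod n + 1) mod n = i"
  by (cases i) (auto simp: mod_Suc)

lemma pred_mod_neq_Suc_mod: "3 \<le> (n::nat) \<Longrightarrow> i < n \<Longrightarrow> (i + n - 1) mod n \<noteq> (i + 1) mod n"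
  by (cases i; cases "i + 1 = n") auto

lemma alt_cycle_converse: "alt_cycle W F (converse D) = alt_cycle W F D"
proof -
  have swap: "((p, c) \<in> D\<inverse> \<and> (s, c) \<in> D\<inverse>) \<or> ((c, p) \<in> D\<inverse> \<and> (c, s) \<in> D\<inverse>) \<longleftrightarrow>
              ((p, c) \<in> D \<and> (s, c) \<in> D) \<or> ((c, p) \<in> D \<and> (c, s) \<in> D)" for p c s
    by auto
  show ?thesis unfolding alt_cycle_def Let_def swap ..
qed

lemma
  shows has_radius_converse: "has_radius W F (converse D) r = has_radius W F D r"
    and has_attachment_converse: "has_attachment W F (converse D) a = has_attachment W F D a"
    and alt_vertices_converse: "alt_vertices W F (converse D) = alt_vertices W F D"
    and alt_adj_converse: "alt_adj W F (converse D) = alt_adj W F D"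
  unfolding has_radius_def has_attachment_def alt_vertices_def alt_adj_def alt_cycle_converse
  by (rule refl)+

lemma alt_cycle_nonempty: "alt_cycle W F D C \<Longrightarrow> C \<noteq> {}"
  unfolding alt_cycle_def Let_def by fastforce

lemma alt_cycle_two_edges_at:
  assumes "alt_cycle W F D C" "x \<in> \<Union>C"
  shows "\<exists>a b. a \<noteq> b \<and> {x, a} \<in> C \<and> {x, b} \<in> C"
proof -
  obtain vs where dist: "distinct vs" and n3: "3 \<le> length vs"
    and C: "C = {{vs ! i, vs ! ((i + 1) mod length vs)} | i. i < length vs}"
    using assms(1) unfolding alt_cycle_def Let_def by blast
  define n where "n = length vs"
  define nx where "nx i = (i + 1) mod n" for i
  define pv where "pv i = (i + n - 1) mod n" for i
  have edge: "{vs ! i, vs ! nx i} \<in> C" if "i < n" for i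
    using that unfolding C n_def nx_def by blast
  have "vs \<noteq> []" using n3 by (cases vs) auto
  then have "x \<in> set vs" using assms(2) unfolding C by (auto intro!: nth_mem)
  then obtain i where i: "i < n" "x = vs ! i" unfolding n_def by (auto simp: in_set_conv_nth)
  have "3 \<le> n" using n3 n_def by simp
  then have "pv i < n" "nx i < n" unfolding pv_def nx_def by simp_all
  then have "{x, vs ! pv i} \<in> C"
    using edge[of "pv i"] Suc_mod_pred_mod[OF i(1)] i unfolding nx_def pv_def
    by (simp add: insert_commute)
  moreover have "{x, vs ! nx i} \<in> C" using edge i by simp
  moreover have "vs ! pv i \<noteq> vs ! nx i"
    using pred_mod_neq_Suc_mod[OF \<open>3 \<le> n\<close> i(1)] dist i \<open>pv i < n\<close> \<open>nx i < n\<close>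
    unfolding n_def nx_def pv_def by (simp add: nth_eq_iff_index_eq)
  ultimately show ?thesis by blast
qed

lemma arc_orbit_swap: "arc_orbit H (y, x) = converse (arc_orbit H (x, y))"
  unfolding arc_orbit_def by auto

locale cubic_graph =
  fixes V :: "'a set" and E :: "'a \<Rightarrow> 'a \<Rightarrow> bool"
  assumes simple: "simple_graph V E" and cubic: "regular_graph V E 3"
begin

lemma edgeD: "E x y \<Longrightarrow> x \<in> V \<and> y \<in> V \<and> x \<noteq> y \<and> E y x"
  using simple unfolding simple_graph_def by blast

lemma nbrs_three:
  assumes "v \<in> V"
  obtains a b c where "a \<noteq> b" "a \<noteq> c" "b \<noteq> c" "\<And>w. E v w \<longleftrightarrow> w \<in> {a, b, c}"
proof -
  have "card {w \<in> V. E v w} = 3" using cubic assms unfolding regular_graph_def by blast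
  then obtain a b c where "a \<noteq> b" "a \<noteq> c" "b \<noteq> c" "{w \<in> V. E v w} = {a, b, c}"
    unfolding card_3_iff by blast
  moreover have "E v w \<longleftrightarrow> w \<in> {w \<in> V. E v w}" for w using edgeD by blast
  ultimately show thesis using that by blast
qed

lemma nbr_avoiding: "v \<in> V \<Longrightarrow> \<exists>w. E v w \<and> w \<noteq> x \<and> w \<noteq> y"
  by (elim nbrs_three) blast

lemma nbr_avoiding_cases:
  assumes "E v u" "E v w" "E v w1" "E v w2" "w \<noteq> u" "w1 \<noteq> u" "w2 \<noteq> u" "w1 \<noteq> w2"
  shows "w = w1 \<or> w = w2"
proof -
  have "v \<in> V" using assms edgeD by blast
  then obtain a b c where "a \<noteq> b" "a \<noteq> c" "b \<noteq> c" and N: "\<And>w. E v w \<longleftrightarrow> w \<in> {a, b, c}"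
    by (rule nbrs_three) blast+
  then show ?thesis using assms(1-4)[unfolded N] assms(5-8) by auto
qed

lemma card_nbrs_minus:
  assumes "E v u"
  shows "card ({w \<in> V. E v w} - {u}) = 2"
proof -
  have "v \<in> V" "u \<in> {w \<in> V. E v w}" using assms edgeD by auto
  moreover have "finite V" using simple unfolding simple_graph_def by blast
  ultimately show ?thesis using cubic unfolding regular_graph_def by (simp add: card_Diff_singleton)
qed

lemma regular_dart_graph: "regular_graph (darts E) (dart_adj E) 4"
  unfolding regular_graph_def
proof
  fix x assume "x \<in> darts E"
  then obtain u v where x: "x = (u, v)" "E u v" unfolding darts_def by auto
  let ?out = "Pair v ` ({w \<in> V. E v w} - {u})" and ?in = "(\<lambda>w. (w, u)) ` ({w \<in> V. E u w} - {v})"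
  have nbrs: "{y \<in> darts E. dart_adj E x y} = ?out \<union> ?in"
    using x unfolding dart_adj_def darts_def by (auto dest: edgeD)
  have "card ?out = 2" "card ?in = 2"
    using card_nbrs_minus[of v u] card_nbrs_minus[of u v] x edgeD
    by (simp_all add: card_image inj_on_def)
  moreover have "?out \<inter> ?in = {}" by auto
  ultimately show "card {y \<in> darts E. dart_adj E x y} = 4"
    unfolding nbrs using simple unfolding simple_graph_def by (simp add: card_Un_disjoint)
qed

abbreviation D :: "(('a \<times> 'a) \<times> ('a \<times> 'a)) set" where
  "D \<equiv> natural_orientation E"

lemma nat_orient_iff: "((u, m), (m', w)) \<in> D \<longleftrightarrow> E u m \<and> E m' w \<and> m = m' \<and> u \<noteq> w"
  unfolding natural_orientation_def darts_def by auto

lemma nat_orientE: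
  assumes "(x, y) \<in> D"
  obtains u m w where "x = (u, m)" "y = (m, w)" "E u m" "E m w" "u \<noteq> w"
  using assms unfolding natural_orientation_def darts_def by auto

lemma nat_orient_asym: "(x, y) \<in> D \<Longrightarrow> (y, x) \<notin> D"
  unfolding natural_orientation_def darts_def by auto

lemma dart_adj_iff_nat_orient: "dart_adj E x y \<longleftrightarrow> (x, y) \<in> D \<or> (y, x) \<in> D"
  unfolding natural_orientation_def dart_adj_def by auto

lemma dart_adj_oriented:
  assumes "dart_adj E x y"
  obtains p q where "(p, q) \<in> D" "{x, y} = {p, q}"
proof -
  consider "(x, y) \<in> D" | "(y, x) \<in> D" using assms unfolding dart_adj_iff_nat_orient by blast
  then show thesis using that by cases (blast, metis insert_commute)
qed

lemma nat_orient_from_dart: "x \<in> darts E \<Longrightarrow> \<exists>y. (x, y) \<in> D"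
proof -
  assume "x \<in> darts E"
  then obtain u v where x: "x = (u, v)" "E u v" unfolding darts_def by auto
  then obtain w where "E v w" "w \<noteq> u" using nbr_avoiding edgeD by blast
  then show ?thesis using x by (auto simp: nat_orient_iff)
qed

lemma nat_orient_nonempty: "V \<noteq> {} \<Longrightarrow> \<exists>x y. (x, y) \<in> D"
proof -
  assume "V \<noteq> {}"
  then obtain v w where "E v w" using nbr_avoiding by blast
  then show ?thesis using nat_orient_from_dart unfolding darts_def by blast
qed

text \<open>The alternating cycle of the natural orientation through all darts at v: its edges
  are the 2-arcs (u, v, w) of the cubic graph.\<close>

definition dart_hexagon :: "'a \<Rightarrow> ('a \<times> 'a) set set" where
  "dart_hexagon v = {{x, y} | x y. (x, y) \<in> D \<and> snd x = v}"

lemma dart_hexagon_pairs: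
  "dart_hexagon v = {{(u, v), (v, w)} | u w. E u v \<and> E v w \<and> u \<noteq> w}"
  unfolding dart_hexagon_def natural_orientation_def darts_def by force

lemma dart_hexagon_explicit:
  assumes "a \<noteq> b" "a \<noteq> c" "b \<noteq> c" "\<And>w. E v w \<longleftrightarrow> w \<in> {a, b, c}"
  shows "dart_hexagon v = {{(a, v), (v, b)}, {(v, b), (c, v)}, {(c, v), (v, a)},
                          {(v, a), (b, v)}, {(b, v), (v, c)}, {(v, c), (a, v)}}"
    (is "_ = ?H")
proof
  have into_v: "E w v \<longleftrightarrow> w \<in> {a, b, c}" for w using assms(4) edgeD by blast
  show "dart_hexagon v \<subseteq> ?H"
  proof
    fix e assume "e \<in> dart_hexagon v"
    then obtain u w where e: "e = {(u, v), (v, w)}" "E u v" "E v w" "u \<noteq> w"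
      unfolding dart_hexagon_pairs by blast
    have "u \<in> {a, b, c}" "w \<in> {a, b, c}" using e into_v assms(4) by blast+
    then show "e \<in> ?H" using e(1,4) by (elim insertE emptyE) (simp_all add: insert_commute)
  qed
  show "?H \<subseteq> dart_hexagon v"
    unfolding dart_hexagon_pairs using assms into_v by blast
qed

lemma mem_dart_hexagon_iff:
  assumes "(x, y) \<in> D"
  shows "{x, y} \<in> dart_hexagon v \<longleftrightarrow> snd x = v"
proof
  assume "{x, y} \<in> dart_hexagon v"
  then obtain a b where "{x, y} = {a, b}" "(a, b) \<in> D" "snd a = v" unfolding dart_hexagon_def by blast
  then show "snd x = v" using assms nat_orient_asym by (metis doubleton_eq_iff)
qed (use assms in \<open>unfold dart_hexagon_def, blast\<close>)

lemma dart_adj_in_hexagon: "dart_adj E x y \<Longrightarrow> \<exists>v. {x, y} \<in> dart_hexagon v"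
  unfolding dart_adj_iff_nat_orient using mem_dart_hexagon_iff by (metis insert_commute)

text \<open>Both edges at a dart of an alternating cycle lie in the same hexagon, because both
  point into it (or out of it) and so pass through the same vertex of the cubic graph.\<close>

lemma dart_hexagon_turn:
  assumes "((p, c) \<in> D \<and> (s, c) \<in> D) \<or> ((c, p) \<in> D \<and> (c, s) \<in> D)"
    and "{p, c} \<in> dart_hexagon v"
  shows "{c, s} \<in> dart_hexagon v"
  using assms(1)
proof
  assume in_c: "(p, c) \<in> D \<and> (s, c) \<in> D"
  then have "snd s = snd p" unfolding natural_orientation_def by auto
  also have "snd p = v" using in_c assms(2) mem_dart_hexagon_iff by blast
  finally show ?thesis using in_c mem_dart_hexagon_iff by (metis insert_commute)
next
  assume out_c: "(c, p) \<in> D \<and> (c, s) \<in> D"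
  then have "snd c = v" using assms(2) mem_dart_hexagon_iff by (metis insert_commute)
  then show ?thesis using out_c mem_dart_hexagon_iff by blast
qed

lemma dart_hexagon_nbr:
  assumes "{x, y} \<in> dart_hexagon v"
  shows "(snd x = v \<and> E v (fst x) \<and> (\<exists>w. y = (v, w) \<and> E v w \<and> w \<noteq> fst x))
       \<or> (fst x = v \<and> E v (snd x) \<and> (\<exists>u. y = (u, v) \<and> E v u \<and> u \<noteq> snd x))"
proof -
  obtain u w where uw: "{x, y} = {(u, v), (v, w)}" "E u v" "E v w" "u \<noteq> w"
    using assms unfolding dart_hexagon_pairs by blast
  then have "E v u" using edgeD by blast
  from uw(1) have "(x = (u, v) \<and> y = (v, w)) \<or> (x = (v, w) \<and> y = (u, v))"
    by (simp add: doubleton_eq_iff)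
  then show ?thesis
  proof
    assume "x = (u, v) \<and> y = (v, w)"
    then show ?thesis using uw(3,4) \<open>E v u\<close> by simp
  next
    assume "x = (v, w) \<and> y = (u, v)"
    then show ?thesis using uw(3,4) \<open>E v u\<close> by auto
  qed
qed

lemma dart_hexagon_nbr_cases:
  assumes "{x, y} \<in> dart_hexagon v" "{x, y1} \<in> dart_hexagon v" "{x, y2} \<in> dart_hexagon v"
    and "y1 \<noteq> y2"
  shows "y = y1 \<or> y = y2"
proof (cases "snd x = v")
  case True
  then have "E v (fst x)" and nbr: "\<And>z. {x, z} \<in> dart_hexagon v \<Longrightarrow> \<exists>w. z = (v, w) \<and> E v w \<and> w \<noteq> fst x"
    using dart_hexagon_nbr assms(1) edgeD by blast+
  then show ?thesis using nbr[OF assms(1)] nbr[OF assms(2)] nbr[OF assms(3)] assms(4)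
    nbr_avoiding_cases[of v "fst x"] by fastforce
next
  case False
  then have "E v (snd x)" and nbr: "\<And>z. {x, z} \<in> dart_hexagon v \<Longrightarrow> \<exists>u. z = (u, v) \<and> E v u \<and> u \<noteq> snd x"
    using dart_hexagon_nbr assms(1) by blast+
  then show ?thesis using nbr[OF assms(1)] nbr[OF assms(2)] nbr[OF assms(3)] assms(4)
    nbr_avoiding_cases[of v "snd x"] by fastforce
qed

lemma darts_at_in_hexagon:
  "{p \<in> darts E. fst p = v \<or> snd p = v} = \<Union>(dart_hexagon v)"
proof
  show "{p \<in> darts E. fst p = v \<or> snd p = v} \<subseteq> \<Union>(dart_hexagon v)"
  proof
    fix p assume "p \<in> {p \<in> darts E. fst p = v \<or> snd p = v}"
    then obtain x y where p: "p = (x, y)" "E x y" "x = v \<or> y = v" unfolding darts_def by auto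
    then have "v \<in> V" using edgeD by blast
    then obtain w where "E v w" "w \<noteq> x" "w \<noteq> y" using nbr_avoiding by blast
    then show "p \<in> \<Union>(dart_hexagon v)"
      unfolding dart_hexagon_pairs using p by (auto dest: edgeD)
  qed
  show "\<Union>(dart_hexagon v) \<subseteq> {p \<in> darts E. fst p = v \<or> snd p = v}"
    unfolding dart_hexagon_pairs darts_def by auto
qed

lemma dart_hexagon_connected:
  assumes closed: "\<And>x y. x \<in> S \<Longrightarrow> {x, y} \<in> dart_hexagon v \<Longrightarrow> y \<in> S"
    and x: "x \<in> S" "x \<in> \<Union>(dart_hexagon v)"
  shows "\<Union>(dart_hexagon v) \<subseteq> S"
proof -
  have step: "(u, v) \<in> S \<longleftrightarrow> (v, w) \<in> S" if "E u v" "E v w" "u \<noteq> w" for u w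
  proof -
    have "{(u, v), (v, w)} \<in> dart_hexagon v" unfolding dart_hexagon_pairs using that by blast
    then show ?thesis using closed[of "(u, v)" "(v, w)"] closed[of "(v, w)" "(u, v)"]
      by (metis insert_commute)
  qed
  obtain a b where ab: "x = (a, b)" "E a b" "a = v \<or> b = v"
    using x(2) unfolding darts_at_in_hexagon[symmetric] darts_def by auto
  then have "v \<in> V" using edgeD by blast
  have "\<exists>u0. E u0 v \<and> (u0, v) \<in> S"
  proof (cases "b = v")
    case True then show ?thesis using ab x(1) by blast
  next
    case False
    obtain u0 where "E v u0" "u0 \<noteq> b" using nbr_avoiding[OF \<open>v \<in> V\<close>] by blast
    then show ?thesis using step[of u0 b] ab False x(1) edgeD by blast
  qed
  then obtain u0 where u0: "E u0 v" "(u0, v) \<in> S" by blast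
  have out: "(v, w) \<in> S" if "E v w" "w \<noteq> u0" for w using step u0 that by blast
  have into: "(u, v) \<in> S" if "E u v" for u
  proof -
    obtain w where "E v w" "w \<noteq> u0" "w \<noteq> u" using nbr_avoiding[OF \<open>v \<in> V\<close>] by blast
    then show ?thesis using step[of u w] out that by blast
  qed
  have "(v, w) \<in> S" if "E v w" for w
  proof -
    obtain u where "E v u" "u \<noteq> w" using nbr_avoiding[OF \<open>v \<in> V\<close>] by blast
    then show ?thesis using step[of u w] into that edgeD by blast
  qed
  with into show ?thesis unfolding darts_at_in_hexagon[symmetric] darts_def by auto
qed

lemma dart_hexagon_alt_cycle:
  assumes "v \<in> V"
  shows "alt_cycle (darts E) (dart_adj E) D (dart_hexagon v)"
proof -
  obtain a b c where abc: "a \<noteq> b" "a \<noteq> c" "b \<noteq> c" "\<And>w. E v w \<longleftrightarrow> w \<in> {a, b, c}"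
    using nbrs_three[OF assms] by blast
  then have edges: "E a v" "E b v" "E c v" "E v a" "E v b" "E v c" "a \<noteq> v" "b \<noteq> v" "c \<noteq> v"
    using edgeD by auto
  define vs where "vs = [(a, v), (v, b), (c, v), (v, a), (b, v), (v, c)]"
  have lt6: "i < 6 \<longleftrightarrow> i = 0 \<or> i = 1 \<or> i = 2 \<or> i = 3 \<or> i = 4 \<or> i = (5::nat)" for i
    by arith
  have "{f i | i. i < 6} = {f 0, f 1, f 2, f 3, f 4, f (5::nat)}" for f :: "nat \<Rightarrow> ('a \<times> 'a) set"
    unfolding lt6 by blast
  then have "{{vs ! i, vs ! ((i + 1) mod 6)} | i. i < 6} = dart_hexagon v"
    unfolding dart_hexagon_explicit[OF abc] vs_def by simp
  moreover have "distinct vs" "set vs \<subseteq> darts E"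
    using abc edges unfolding vs_def darts_def by auto
  moreover have "\<forall>i<6. dart_adj E (vs ! i) (vs ! ((i + 1) mod 6))"
    unfolding lt6 vs_def dart_adj_def darts_def using abc edges by auto
  moreover have "\<forall>i<6. let p = vs ! ((i + 6 - 1) mod 6); c = vs ! i; s = vs ! ((i + 1) mod 6) in
          ((p, c) \<in> D \<and> (s, c) \<in> D) \<or> ((c, p) \<in> D \<and> (c, s) \<in> D)"
    unfolding lt6 vs_def Let_def using abc edges by (auto simp: nat_orient_iff)
  moreover have "length vs = 6" unfolding vs_def by simp
  ultimately show ?thesis unfolding alt_cycle_def by (intro exI[of _ vs]) (simp add: Let_def)
qed

lemma alt_cycle_within_dart_hexagon:
  assumes "alt_cycle (darts E) (dart_adj E) D C"
  shows "\<exists>v. C \<subseteq> dart_hexagon v"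
proof -
  obtain vs where n3: "3 \<le> length vs"
    and adj: "\<forall>i<length vs. dart_adj E (vs ! i) (vs ! ((i + 1) mod length vs))"
    and alt: "\<forall>i<length vs.
      ((vs ! ((i + length vs - 1) mod length vs), vs ! i) \<in> D \<and> (vs ! ((i + 1) mod length vs), vs ! i) \<in> D) \<or>
      ((vs ! i, vs ! ((i + length vs - 1) mod length vs)) \<in> D \<and> (vs ! i, vs ! ((i + 1) mod length vs)) \<in> D)"
    and C: "C = {{vs ! i, vs ! ((i + 1) mod length vs)} | i. i < length vs}"
    using assms unfolding alt_cycle_def Let_def by blast
  have "vs \<noteq> []" using n3 by (cases vs) auto
  define n where "n = length vs"
  define nx where "nx i = (i + 1) mod n" for i
  have "dart_adj E (vs ! 0) (vs ! nx 0)"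
    using adj[rule_format, of 0] n3 \<open>vs \<noteq> []\<close> unfolding nx_def n_def by simp
  then obtain v where e0: "{vs ! 0, vs ! nx 0} \<in> dart_hexagon v" using dart_adj_in_hexagon by blast
  have "{vs ! i, vs ! nx i} \<in> dart_hexagon v" if "i < n" for i
    using that
  proof (induction i)
    case (Suc i)
    then have "(Suc i + n - 1) mod n = i" "nx i = Suc i" unfolding nx_def by simp_all
    then show ?case
      using dart_hexagon_turn alt[rule_format, of "Suc i"] Suc unfolding n_def nx_def by auto
  qed (use e0 in simp)
  then show ?thesis unfolding C n_def nx_def by blast
qed

lemma dart_hexagon_eqI:
  assumes "C \<subseteq> dart_hexagon v" "C \<noteq> {}"
    and two_edges: "\<And>x. x \<in> \<Union>C \<Longrightarrow> \<exists>a b. a \<noteq> b \<and> {x, a} \<in> C \<and> {x, b} \<in> C"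
  shows "C = dart_hexagon v"
proof
  have closed: "{x, y} \<in> C" if "x \<in> \<Union>C" "{x, y} \<in> dart_hexagon v" for x y
    using two_edges[OF that(1)] dart_hexagon_nbr_cases[OF that(2)] assms(1) by blast
  obtain x where "x \<in> \<Union>C" using assms(1,2) unfolding dart_hexagon_def by blast
  then have "\<Union>(dart_hexagon v) \<subseteq> \<Union>C"
    using closed assms(1) by (intro dart_hexagon_connected) blast+
  then show "dart_hexagon v \<subseteq> C"
    using closed unfolding dart_hexagon_def by blast
qed fact

lemma alt_cycle_imp_dart_hexagon:
  assumes "alt_cycle (darts E) (dart_adj E) D C"
  shows "\<exists>v\<in>V. C = dart_hexagon v"
proof -
  obtain v where "C \<subseteq> dart_hexagon v" using alt_cycle_within_dart_hexagon[OF assms] by blast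
  moreover have "C \<noteq> {}" using alt_cycle_nonempty[OF assms] .
  ultimately have "C = dart_hexagon v"
    using alt_cycle_two_edges_at[OF assms] by (intro dart_hexagon_eqI)
  moreover have "v \<in> V" using \<open>C = dart_hexagon v\<close> \<open>C \<noteq> {}\<close>
    unfolding dart_hexagon_pairs by (auto dest: edgeD)
  ultimately show ?thesis by blast
qed

lemma alt_cycle_iff_dart_hexagon:
  "alt_cycle (darts E) (dart_adj E) D C \<longleftrightarrow> (\<exists>v\<in>V. C = dart_hexagon v)"
  using alt_cycle_imp_dart_hexagon dart_hexagon_alt_cycle by blast

lemma card_dart_hexagon: "v \<in> V \<Longrightarrow> card (dart_hexagon v) = 6"
proof (elim nbrs_three)
  fix a b c assume abc: "a \<noteq> b" "a \<noteq> c" "b \<noteq> c" "\<And>w. E v w \<longleftrightarrow> w \<in> {a, b, c}"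
  then have "a \<noteq> v" "b \<noteq> v" "c \<noteq> v" using edgeD by blast+
  then show "card (dart_hexagon v) = 6"
    unfolding dart_hexagon_explicit[OF abc] using abc(1-3) by (simp add: doubleton_eq_iff)
qed

lemma cycle_verts_dart_hexagon:
  "cycle_verts (dart_hexagon v) = {p \<in> darts E. fst p = v \<or> snd p = v}"
  unfolding cycle_verts_def darts_at_in_hexagon ..

lemma cycle_verts_dart_hexagon_Int:
  "v \<noteq> v' \<Longrightarrow> cycle_verts (dart_hexagon v) \<inter> cycle_verts (dart_hexagon v') =
     (if E v v' then {(v, v'), (v', v)} else {})"
  unfolding cycle_verts_dart_hexagon by (auto simp: darts_def dest: edgeD)

lemma inj_on_dart_hexagon: "inj_on dart_hexagon V"
proof
  fix v v' assume "v \<in> V" "v' \<in> V" and eq: "dart_hexagon v = dart_hexagon v'"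
  obtain w where "E v w" "w \<noteq> v'" using nbr_avoiding[OF \<open>v \<in> V\<close>] by blast
  then have "(v, w) \<in> cycle_verts (dart_hexagon v')"
    unfolding eq[symmetric] cycle_verts_dart_hexagon darts_def by simp
  then show "v = v'" using \<open>w \<noteq> v'\<close> unfolding cycle_verts_dart_hexagon by simp
qed

lemma has_radius_nat_orient: "V \<noteq> {} \<Longrightarrow> has_radius (darts E) (dart_adj E) D 3"
  unfolding has_radius_def alt_cycle_iff_dart_hexagon using card_dart_hexagon by auto

lemma has_attachment_nat_orient: "has_attachment (darts E) (dart_adj E) D 2"
  unfolding has_attachment_def alt_cycle_iff_dart_hexagon
proof (intro allI impI)
  fix C1 C2 assume "\<exists>v\<in>V. C1 = dart_hexagon v" "\<exists>v\<in>V. C2 = dart_hexagon v" "C1 \<noteq> C2"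
    and meet: "cycle_verts C1 \<inter> cycle_verts C2 \<noteq> {}"
  then obtain v v' where "C1 = dart_hexagon v" "C2 = dart_hexagon v'" "v \<noteq> v'" by blast
  moreover from this have "E v v'" using meet cycle_verts_dart_hexagon_Int by (auto split: if_splits)
  ultimately show "card (cycle_verts C1 \<inter> cycle_verts C2) = 2"
    using cycle_verts_dart_hexagon_Int by (auto dest: edgeD)
qed

lemma alt_graph_iso_nat_orient:
  "graph_iso (alt_vertices (darts E) (dart_adj E) D) (alt_adj (darts E) (dart_adj E) D) V E"
proof -
  have "alt_vertices (darts E) (dart_adj E) D = dart_hexagon ` V"
    unfolding alt_vertices_def alt_cycle_iff_dart_hexagon by auto
  moreover have "bij_betw (inv_into V dart_hexagon) (dart_hexagon ` V) V"
    using inj_on_dart_hexagon by (simp add: bij_betw_inv_into inj_on_imp_bij_betw)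
  moreover have "alt_adj (darts E) (dart_adj E) D (dart_hexagon v) (dart_hexagon v') \<longleftrightarrow> E v v'"
    if "v \<in> V" "v' \<in> V" for v v'
  proof -
    have "dart_hexagon v = dart_hexagon v' \<longleftrightarrow> v = v'"
      using that inj_on_dart_hexagon by (auto dest: inj_onD)
    then show ?thesis unfolding alt_adj_def alt_cycle_iff_dart_hexagon
      using that cycle_verts_dart_hexagon_Int[of v v'] edgeD[of v v'] by auto
  qed
  ultimately show ?thesis
    unfolding graph_iso_def using inj_on_dart_hexagon by (auto simp: inv_into_f_f)
qed

end

locale cubic_graph_two_arc_transitive = cubic_graph +
  fixes G :: "('a \<Rightarrow> 'a) set"
  assumes aut_group: "aut_group V E G" and two_arc_trans: "two_arc_transitive E G"
begin

lemma graph_aut: "g \<in> G \<Longrightarrow> graph_aut V E g"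
  using aut_group unfolding aut_group_def by blast

lemma aut_edge: "g \<in> G \<Longrightarrow> E x y \<Longrightarrow> E (g x) (g y)"
  using graph_aut edgeD unfolding graph_aut_def by blast

lemma aut_eq_iff: "g \<in> G \<Longrightarrow> x \<in> V \<Longrightarrow> y \<in> V \<Longrightarrow> g x = g y \<longleftrightarrow> x = y"
  using graph_aut unfolding graph_aut_def bij_betw_def inj_on_def by blast

lemma dart_act_nat_orient:
  assumes "(x, y) \<in> D" "g \<in> G"
  shows "(dart_act g x, dart_act g y) \<in> D"
  using assms(1)
proof (elim nat_orientE)
  fix u m w assume uvw: "x = (u, m)" "y = (m, w)" "E u m" "E m w" "u \<noteq> w"
  then have "g u \<noteq> g w" using aut_eq_iff[OF assms(2)] edgeD by blast
  then show ?thesis using uvw aut_edge[OF assms(2)] by (simp add: dart_act_def nat_orient_iff)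
qed

lemma nat_orient_transitive:
  assumes "(x, y) \<in> D" "(x', y') \<in> D"
  shows "\<exists>g\<in>G. dart_act g x = x' \<and> dart_act g y = y'"
proof -
  obtain u m w where "x = (u, m)" "y = (m, w)" "(u, m, w) \<in> two_arcs E"
    using assms(1) by (elim nat_orientE) (auto simp: two_arcs_def)
  moreover obtain u' m' w' where "x' = (u', m')" "y' = (m', w')" "(u', m', w') \<in> two_arcs E"
    using assms(2) by (elim nat_orientE) (auto simp: two_arcs_def)
  ultimately show ?thesis
    using two_arc_trans unfolding two_arc_transitive_def dart_act_def by fastforce
qed

lemma arc_orbit_nat_orient:
  assumes "(x, y) \<in> D"
  shows "arc_orbit (dart_act ` G) (x, y) = D"
proof
  show "arc_orbit (dart_act ` G) (x, y) \<subseteq> D"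
    unfolding arc_orbit_def using dart_act_nat_orient[OF assms] by auto
  show "D \<subseteq> arc_orbit (dart_act ` G) (x, y)"
  proof
    fix p assume "p \<in> D"
    then obtain g where "g \<in> G" "p = (dart_act g x, dart_act g y)"
      using nat_orient_transitive[OF assms] by (metis prod.collapse)
    then show "p \<in> arc_orbit (dart_act ` G) (x, y)" unfolding arc_orbit_def by auto
  qed
qed

lemma arc_orbit_cases:
  assumes "a \<in> arcs (dart_adj E)"
  shows "arc_orbit (dart_act ` G) a = D \<or> arc_orbit (dart_act ` G) a = converse D"
proof -
  obtain x y where "a = (x, y)" "(x, y) \<in> D \<or> (y, x) \<in> D"
    using assms unfolding arcs_def dart_adj_iff_nat_orient by auto
  then show ?thesis using arc_orbit_nat_orient arc_orbit_swap by metis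
qed

lemma graph_aut_dart_act:
  assumes "g \<in> G"
  shows "graph_aut (darts E) (dart_adj E) (dart_act g)"
proof -
  have maps: "dart_act g p \<in> darts E" if "p \<in> darts E" for p
    using that aut_edge[OF assms] unfolding darts_def dart_act_def by auto
  have "inj_on (dart_act g) (darts E)"
    using aut_eq_iff[OF assms] unfolding inj_on_def darts_def dart_act_def
    by (auto simp: prod_eq_iff dest: edgeD)
  moreover have "darts E \<subseteq> dart_act g ` darts E"
  proof
    fix p assume "p \<in> darts E"
    then obtain u' v' where p: "p = (u', v')" "E u' v'" unfolding darts_def by auto
    have "g ` V = V" using graph_aut[OF assms] unfolding graph_aut_def bij_betw_def by blast
    then have "u' \<in> g ` V" "v' \<in> g ` V" using p edgeD by blast+
    then obtain u v where uv: "u \<in> V" "v \<in> V" "g u = u'" "g v = v'" by blast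
    then have "E u v" using graph_aut[OF assms] p unfolding graph_aut_def by blast
    then show "p \<in> dart_act g ` darts E" using uv p unfolding darts_def dart_act_def by force
  qed
  moreover have "dart_adj E x y \<longleftrightarrow> dart_adj E (dart_act g x) (dart_act g y)"
    if xy: "x \<in> darts E" "y \<in> darts E" for x y
  proof -
    obtain a b c d where abcd: "x = (a, b)" "y = (c, d)" "E a b" "E c d"
      using xy unfolding darts_def by auto
    then have "g c = g b \<longleftrightarrow> c = b" "g a = g d \<longleftrightarrow> a = d"
      using aut_eq_iff[OF assms] edgeD by blast+
    moreover have "dart_act g x \<in> darts E" "dart_act g y \<in> darts E" using maps xy by blast+
    ultimately show ?thesis using xy abcd unfolding dart_adj_def dart_act_def by simp
  qed
  ultimately show ?thesis unfolding graph_aut_def bij_betw_def using maps by blast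
qed

lemma half_arc_transitive_dart_graph:
  assumes "V \<noteq> {}"
  shows "half_arc_transitive (darts E) (dart_adj E) (dart_act ` G)"
  unfolding half_arc_transitive_def
proof (intro conjI)
  show "\<forall>h\<in>dart_act ` G. graph_aut (darts E) (dart_adj E) h" using graph_aut_dart_act by blast
  show "\<forall>x\<in>darts E. \<forall>y\<in>darts E. \<exists>h\<in>dart_act ` G. h x = y"
  proof (intro ballI)
    fix x y assume "x \<in> darts E" "y \<in> darts E"
    then obtain x' y' where "(x, x') \<in> D" "(y, y') \<in> D" using nat_orient_from_dart by blast
    then obtain g where "g \<in> G" "dart_act g x = y" using nat_orient_transitive by blast
    then show "\<exists>h\<in>dart_act ` G. h x = y" by blast
  qed
  show "\<forall>x y x' y'. dart_adj E x y \<longrightarrow> dart_adj E x' y' \<longrightarrow>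
          (\<exists>h\<in>dart_act ` G. {h x, h y} = {x', y'})"
  proof (intro allI impI)
    fix x y x' y' assume "dart_adj E x y" "dart_adj E x' y'"
    obtain p q where pq: "(p, q) \<in> D" "{x, y} = {p, q}"
      using \<open>dart_adj E x y\<close> by (rule dart_adj_oriented)
    obtain p' q' where pq': "(p', q') \<in> D" "{x', y'} = {p', q'}"
      using \<open>dart_adj E x' y'\<close> by (rule dart_adj_oriented)
    obtain g where g: "g \<in> G" "dart_act g p = p'" "dart_act g q = q'"
      using nat_orient_transitive[OF pq(1) pq'(1)] by blast
    have "{dart_act g x, dart_act g y} = dart_act g ` {p, q}"
      using pq(2) by (metis image_insert image_empty)
    also have "\<dots> = {x', y'}" using g(2,3) pq'(2) by simp
    finally show "\<exists>h\<in>dart_act ` G. {h x, h y} = {x', y'}" using g(1) by blast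
  qed
  show "\<not> (\<forall>x y x' y'. dart_adj E x y \<longrightarrow> dart_adj E x' y' \<longrightarrow>
           (\<exists>h\<in>dart_act ` G. h x = x' \<and> h y = y'))"
  proof
    assume reverse: "\<forall>x y x' y'. dart_adj E x y \<longrightarrow> dart_adj E x' y' \<longrightarrow>
                       (\<exists>h\<in>dart_act ` G. h x = x' \<and> h y = y')"
    obtain x y where xy: "(x, y) \<in> D" using nat_orient_nonempty assms by blast
    then have "dart_adj E x y" "dart_adj E y x" unfolding dart_adj_iff_nat_orient by simp_all
    then obtain g where "g \<in> G" "dart_act g x = y" "dart_act g y = x" using reverse by blast
    then show False using dart_act_nat_orient[OF xy] nat_orient_asym[OF xy] by metis
  qed
qed

end

theorem proposition2p2:
  fixes V :: "'a set" and E :: "'a \<Rightarrow> 'a \<Rightarrow> bool" and G :: "('a \<Rightarrow> 'a) set"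
  assumes "simple_graph V E"
    and "connected_graph V E"
    and "regular_graph V E 3"
    and "aut_group V E G"
    and "two_arc_transitive E G"
  shows "regular_graph (darts E) (dart_adj E) 4
    \<and> half_arc_transitive (darts E) (dart_adj E) (dart_act ` G)
    \<and> (\<forall>a\<in>arcs (dart_adj E).
         has_radius (darts E) (dart_adj E) (arc_orbit (dart_act ` G) a) 3
       \<and> has_attachment (darts E) (dart_adj E) (arc_orbit (dart_act ` G) a) 2
       \<and> graph_iso (alt_vertices (darts E) (dart_adj E) (arc_orbit (dart_act ` G) a))
                   (alt_adj (darts E) (dart_adj E) (arc_orbit (dart_act ` G) a)) V E)
    \<and> (\<exists>a\<in>arcs (dart_adj E). natural_orientation E = arc_orbit (dart_act ` G) a)"
proof -
  interpret cubic_graph_two_arc_transitive V E G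
    using assms by unfold_locales
  have "V \<noteq> {}" using assms(2) unfolding connected_graph_def by blast
  have "has_radius (darts E) (dart_adj E) (arc_orbit (dart_act ` G) a) 3
       \<and> has_attachment (darts E) (dart_adj E) (arc_orbit (dart_act ` G) a) 2
       \<and> graph_iso (alt_vertices (darts E) (dart_adj E) (arc_orbit (dart_act ` G) a))
                   (alt_adj (darts E) (dart_adj E) (arc_orbit (dart_act ` G) a)) V E"
    if "a \<in> arcs (dart_adj E)" for a
    using arc_orbit_cases[OF that] has_radius_nat_orient[OF \<open>V \<noteq> {}\<close>]
      has_attachment_nat_orient alt_graph_iso_nat_orient
    by (auto simp: has_radius_converse has_attachment_converse alt_vertices_converse alt_adj_converse)
  moreover obtain x y where xy: "(x, y) \<in> natural_orientation E"
    using nat_orient_nonempty[OF \<open>V \<noteq> {}\<close>] by blast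
  then have "(x, y) \<in> arcs (dart_adj E)" unfolding arcs_def dart_adj_iff_nat_orient by simp
  ultimately show ?thesis
    using arc_orbit_nat_orient[OF xy] regular_dart_graph half_arc_transitive_dart_graph[OF \<open>V \<noteq> {}\<close>]
    by blast
qed

end
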